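(* Let $X$ be a Banach space, $\varphi:X\to\,]-\infty,+\infty]$ be quasiconvex, proper and lower semicontinuous, and $v^*\in X^*$. If $\varphi_{v^*}$ is not quasiconvex, then there exist $u,v,w\in X$ with $v\in\,]u,w[$ such that (i) $\varphi(w)\ge\varphi(v)>\varphi(u)$; (ii) $\varphi_{v^*}(v)>\max\{\varphi_{v^*}(u),\varphi_{v^*}(w)\}$; (iii) for every $\gamma>0$ there exists $v_\gamma\in\mathbb{B}_\gamma(v)\cap\,]v,w[$ with $\varphi_{v^*}(v)>\varphi_{v^*}(v_\gamma)$.
   Context: $]a,b[$ denotes the open segment $\{a+t(b-a):t\in\,]0,1[\}$; $\mathbb{B}_\gamma(v)$ is the open ball of radius $\gamma$ centered at $v$. For $v^*\in X^*$, $\varphi_{v^*}(x):=\varphi(x)+\langle v^*,x\rangle$. A function $f$ is quasiconvex if $f(\lambda x+(1-\lambda)y)\le\max\{f(x),f(y)\}$ for all $x,y\in X$, $\lambda\in\,]0,1[$. *)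

theory Defs
  imports "HOL-Analysis.Analysis"
begin

definition oseg :: "'a::real_vector \<Rightarrow> 'a \<Rightarrow> 'a set" where
  "oseg a b = {a + t *\<^sub>R (b - a) | t. 0 < t \<and> t < 1}"

definition quasiconvex :: "('a::real_vector \<Rightarrow> ereal) \<Rightarrow> bool" where
  "quasiconvex f \<longleftrightarrow>
     (\<forall>x y t::real. 0 < t \<and> t < 1 \<longrightarrow>
        f (t *\<^sub>R x + (1 - t) *\<^sub>R y) \<le> max (f x) (f y))"

definition proper_fun :: "('a \<Rightarrow> ereal) \<Rightarrow> bool" where
  "proper_fun f \<longleftrightarrow> (\<forall>x. f x \<noteq> -\<infinity>) \<and> (\<exists>x. f x \<noteq> \<infinity>)"

definition lsc :: "('a::topological_space \<Rightarrow> ereal) \<Rightarrow> bool" where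
  "lsc f \<longleftrightarrow> (\<forall>c. closed {x. f x \<le> c})"

definition tilt :: "('a \<Rightarrow> ereal) \<Rightarrow> ('a \<Rightarrow> real) \<Rightarrow> 'a \<Rightarrow> ereal" where
  "tilt f l x = f x + ereal (l x)"

end

theory Submission
  imports Defs
begin

text \<open>Non-quasiconvexity of the tilt gives a point z of a segment [a,b] at which the tilt
  strictly exceeds its values at both ends, and, since a linear term cannot be peaked, \<open>\<phi>\<close>
  strictly exceeds its value at one end, say a. By quasiconvexity \<open>\<phi>\<close> is then nondecreasing
  along the segment from z to b, so there the tilt is a nondecreasing function plus an affine
  one and can only jump upwards. As the tilt is smaller at b than at z, a real-induction
  argument on [z,b] produces the point v.\<close>

lemma real_induction_on_interval:
  fixes a b :: real
  assumes "a \<le> b"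
    and left: "\<And>t. a \<le> t \<Longrightarrow> t \<le> b \<Longrightarrow> \<forall>s\<in>{a..<t}. P s \<Longrightarrow> P t"
    and right: "\<And>t. a \<le> t \<Longrightarrow> t < b \<Longrightarrow> \<forall>s\<in>{a..t}. P s \<Longrightarrow>
                  \<exists>\<delta>>0. \<forall>s\<in>{t<..<t + \<delta>}. P s"
  shows "\<forall>s\<in>{a..b}. P s"
proof -
  define S where "S = {t\<in>{a..b}. \<forall>s\<in>{a..t}. P s}"
  define T where "T = Sup S"
  have "P a" using left[of a] \<open>a \<le> b\<close> by simp
  then have "a \<in> S" using \<open>a \<le> b\<close> by (auto simp: S_def)
  have "bdd_above S" by (auto simp: S_def bdd_above_def)
  have T: "a \<le> T" "T \<le> b"
    using \<open>a \<in> S\<close> \<open>bdd_above S\<close> unfolding T_def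
    by (fastforce intro: cSup_upper, intro cSup_least) (auto simp: S_def)
  have below_T: "P s" if s: "s \<in> {a..<T}" for s
  proof -
    obtain t where "t \<in> S" "s < t"
      using s less_cSup_iff[of S s] \<open>a \<in> S\<close> \<open>bdd_above S\<close> by (auto simp: T_def)
    then show ?thesis using s by (auto simp: S_def)
  qed
  then have up_to_T: "\<forall>s\<in>{a..T}. P s"
    using left[OF T] by (metis atLeastAtMost_iff atLeastLessThan_iff order_less_le)
  have "T = b"
  proof (rule ccontr)
    assume "T \<noteq> b"
    with T have "T < b" by simp
    obtain \<delta> where "\<delta> > 0" and \<delta>: "\<forall>s\<in>{T<..<T + \<delta>}. P s"
      using right[OF T(1) \<open>T < b\<close> up_to_T] by blast
    define T' where "T' = T + min \<delta> (b - T) / 2"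
    have "T < T'" "T' \<le> b" "T' < T + \<delta>"
      using \<open>\<delta> > 0\<close> \<open>T < b\<close> by (auto simp: T'_def min_def field_simps)
    then have "T' \<in> S"
      using T up_to_T \<delta> by (force simp: S_def)
    then have "T' \<le> T" using \<open>bdd_above S\<close> by (simp add: T_def cSup_upper)
    with \<open>T < T'\<close> show False by simp
  qed
  with up_to_T show ?thesis by simp
qed

lemma ge_at_right_end_if_minus_linear_mono:
  fixes H :: "real \<Rightarrow> real"
  assumes mono: "mono_on {a..b} (\<lambda>s. H s - \<alpha> * s)" and "a < b"
    and bound: "\<forall>s\<in>{a..<b}. c \<le> H s"
  shows "c \<le> H b"
proof -
  have "c - (H b - \<alpha> * b) \<le> \<alpha> * s" if "s \<in> {a..<b}" for s
  proof -
    have "H s - \<alpha> * s \<le> H b - \<alpha> * b"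
      using mono that \<open>a < b\<close> by (auto intro: mono_onD)
    with bound that show ?thesis by fastforce
  qed
  moreover have "eventually (\<lambda>s. s \<in> {a..<b}) (at_left b)"
    using \<open>a < b\<close> eventually_at_left_real by (force elim: eventually_mono)
  ultimately have "eventually (\<lambda>s. c - (H b - \<alpha> * b) \<le> \<alpha> * s) (at_left b)"
    by (auto elim: eventually_mono)
  then have "c - (H b - \<alpha> * b) \<le> \<alpha> * b"
    by (rule tendsto_lowerbound[rotated]) (auto intro!: tendsto_eq_intros)
  then show ?thesis by simp
qed

lemma exists_point_of_right_descent:
  fixes H :: "real \<Rightarrow> real"
  assumes mono: "mono_on {a..b} (\<lambda>s. H s - \<alpha> * s)" and "a \<le> b" and "H b < H a"
  shows "\<exists>v\<in>{a..<b}. H a \<le> H v \<and> (\<forall>\<delta>>0. \<exists>s. v < s \<and> s < b \<and> s < v + \<delta> \<and> H s < H v)"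
proof (rule ccontr)
  assume "\<not> ?thesis"
  then have no_descent: "\<exists>\<delta>>0. \<forall>s. v < s \<and> s < b \<and> s < v + \<delta> \<longrightarrow> H v \<le> H s"
    if "v \<in> {a..<b}" "H a \<le> H v" for v
    using that by (meson not_less)
  have "\<forall>s\<in>{a..b}. H a \<le> H s"
  proof (rule real_induction_on_interval[OF \<open>a \<le> b\<close>])
    fix t assume "a \<le> t" "t \<le> b" and below: "\<forall>s\<in>{a..<t}. H a \<le> H s"
    show "H a \<le> H t"
    proof (cases "t = a")
      case False
      have "mono_on {a..t} (\<lambda>s. H s - \<alpha> * s)"
        using mono \<open>t \<le> b\<close> by (auto intro: mono_on_subset)
      with False \<open>a \<le> t\<close> below show ?thesis
        by (intro ge_at_right_end_if_minus_linear_mono) auto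
    qed simp
  next
    fix t assume "a \<le> t" "t < b" and upto: "\<forall>s\<in>{a..t}. H a \<le> H s"
    then obtain \<delta> where "\<delta> > 0" and \<delta>: "\<forall>s. t < s \<and> s < b \<and> s < t + \<delta> \<longrightarrow> H t \<le> H s"
      using no_descent[of t] by auto
    have "H a \<le> H t" using upto \<open>a \<le> t\<close> by simp
    then have "\<forall>s\<in>{t<..<t + min \<delta> (b - t)}. H a \<le> H s"
      using \<delta> by (fastforce intro: order_trans)
    with \<open>\<delta> > 0\<close> \<open>t < b\<close> show "\<exists>\<delta>>0. \<forall>s\<in>{t<..<t + \<delta>}. H a \<le> H s"
      by (intro exI[of _ "min \<delta> (b - t)"]) auto
  qed
  then have "H a \<le> H b" using \<open>a \<le> b\<close> by simp
  with \<open>H b < H a\<close> show False by simp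
qed

lemma quasiconvex_le_max_on_segment:
  assumes "quasiconvex f" "0 \<le> s" "s \<le> 1"
  shows "f (a + s *\<^sub>R (b - a)) \<le> max (f a) (f b)"
proof -
  consider "s = 0" | "s = 1" | "0 < s \<and> s < 1" using assms(2,3) by fastforce
  then show ?thesis
  proof cases
    case 3
    have "a + s *\<^sub>R (b - a) = s *\<^sub>R b + (1 - s) *\<^sub>R a" by (simp add: algebra_simps)
    with assms(1) 3 show ?thesis unfolding quasiconvex_def by (metis max.commute)
  qed auto
qed

lemma quasiconvex_le_max_on_ray:
  assumes "quasiconvex f" "0 \<le> s" "s \<le> s'" "0 < s'"
  shows "f (a + s *\<^sub>R (b - a)) \<le> max (f a) (f (a + s' *\<^sub>R (b - a)))"
proof -
  have "a + s *\<^sub>R (b - a) = a + (s / s') *\<^sub>R ((a + s' *\<^sub>R (b - a)) - a)"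
    using assms(4) by simp
  then show ?thesis
    using quasiconvex_le_max_on_segment[OF assms(1), of "s / s'" a "a + s' *\<^sub>R (b - a)"] assms(2-4)
    by simp
qed

lemma quasiconvex_increase_persists_on_ray:
  assumes "quasiconvex f" "0 < s0" "s0 \<le> s" "f a < f (a + s0 *\<^sub>R (b - a))"
  shows "f a < f (a + s *\<^sub>R (b - a))"
  using quasiconvex_le_max_on_ray[OF assms(1), of s0 s a b] assms(2-4)
  by (auto simp: max_def split: if_splits)

lemma quasiconvex_mono_on_ray_after_increase:
  assumes "quasiconvex f" "0 < s0" "f a < f (a + s0 *\<^sub>R (b - a))"
  shows "mono_on {s0..} (\<lambda>s. f (a + s *\<^sub>R (b - a)))"
proof (rule mono_onI)
  fix s s' assume "s \<in> {s0..}" "s' \<in> {s0..}" "s \<le> s'"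
  with assms have "f a < f (a + s *\<^sub>R (b - a))"
    by (auto intro: quasiconvex_increase_persists_on_ray)
  with quasiconvex_le_max_on_ray[OF assms(1), of s s' a b] \<open>s \<in> {s0..}\<close> \<open>s \<le> s'\<close> assms(2)
  show "f (a + s *\<^sub>R (b - a)) \<le> f (a + s' *\<^sub>R (b - a))"
    by (auto simp: max_def split: if_splits)
qed

lemma proper_quasiconvex_finite_on_segment:
  assumes "quasiconvex f" "proper_fun f" "f a \<noteq> \<infinity>" "f b \<noteq> \<infinity>" "0 \<le> s" "s \<le> 1"
  shows "\<bar>f (a + s *\<^sub>R (b - a))\<bar> \<noteq> \<infinity>"
proof -
  have "f (a + s *\<^sub>R (b - a)) < \<infinity>"
    using quasiconvex_le_max_on_segment[OF assms(1,5,6), of a b] assms(3,4)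
    by (auto simp: max_def split: if_splits)
  with assms(2) show ?thesis
    unfolding proper_fun_def by (cases "f (a + s *\<^sub>R (b - a))") auto
qed

lemma tilt_peak_imp_increase_from_endpoint:
  assumes "linear l" "0 \<le> t" "t \<le> 1"
    and peak: "max (tilt f l x) (tilt f l y) < tilt f l (t *\<^sub>R x + (1 - t) *\<^sub>R y)"
  shows "f x < f (t *\<^sub>R x + (1 - t) *\<^sub>R y) \<or> f y < f (t *\<^sub>R x + (1 - t) *\<^sub>R y)"
proof (rule ccontr)
  define z where "z = t *\<^sub>R x + (1 - t) *\<^sub>R y"
  assume "\<not> ?thesis"
  then have "f z \<le> f x" "f z \<le> f y" by (auto simp: z_def not_less)
  have "l z = t * l x + (1 - t) * l y"
    using \<open>linear l\<close> by (simp add: z_def linear_add linear_scale)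
  then have "l z \<le> max (l x) (l y)"
    using assms(2,3) by (auto intro: convex_bound_le)
  then have "tilt f l z \<le> max (tilt f l x) (tilt f l y)"
    using \<open>f z \<le> f x\<close> \<open>f z \<le> f y\<close> unfolding tilt_def
    by (metis add_mono ereal_less_eq(3) le_max_iff_disj max_def)
  with peak show False unfolding z_def by (meson leD)
qed

lemma segment_point_in_ball_oseg:
  fixes a b :: "'a::real_normed_vector"
  assumes "v < s" "s < 1" "(s - v) * norm (b - a) < \<gamma>"
  shows "a + s *\<^sub>R (b - a) \<in> ball (a + v *\<^sub>R (b - a)) \<gamma> \<inter> oseg (a + v *\<^sub>R (b - a)) b"
proof
  have "(a + v *\<^sub>R (b - a)) - (a + s *\<^sub>R (b - a)) = (v - s) *\<^sub>R (b - a)"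
    by (simp add: algebra_simps)
  with assms show "a + s *\<^sub>R (b - a) \<in> ball (a + v *\<^sub>R (b - a)) \<gamma>"
    by (simp add: dist_norm)
  have "b - (a + v *\<^sub>R (b - a)) = (1 - v) *\<^sub>R (b - a)"
    by (simp add: algebra_simps)
  then have step: "((s - v) / (1 - v)) *\<^sub>R (b - (a + v *\<^sub>R (b - a))) = (s - v) *\<^sub>R (b - a)"
    using assms(1,2) by simp
  have "a + s *\<^sub>R (b - a) = (a + v *\<^sub>R (b - a)) + (s - v) *\<^sub>R (b - a)"
    by (simp add: algebra_simps)
  then have "a + s *\<^sub>R (b - a) = (a + v *\<^sub>R (b - a)) + ((s - v) / (1 - v)) *\<^sub>R (b - (a + v *\<^sub>R (b - a)))"
    by (simp only: step)
  moreover have "0 < (s - v) / (1 - v)" "(s - v) / (1 - v) < 1"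
    using assms(1,2) by auto
  ultimately show "a + s *\<^sub>R (b - a) \<in> oseg (a + v *\<^sub>R (b - a)) b"
    unfolding oseg_def by blast
qed

lemma tilt_peak_after_increase_on_segment:
  fixes \<phi> :: "'a::real_normed_vector \<Rightarrow> ereal"
  assumes qc: "quasiconvex \<phi>" and "proper_fun \<phi>" and "linear l"
    and "0 < s0" "s0 < 1"
    and increase: "\<phi> a < \<phi> (a + s0 *\<^sub>R (b - a))"
    and peak: "max (tilt \<phi> l a) (tilt \<phi> l b) < tilt \<phi> l (a + s0 *\<^sub>R (b - a))"
  shows "\<exists>v. v \<in> oseg a b \<and> \<phi> b \<ge> \<phi> v \<and> \<phi> v > \<phi> a \<and>
           tilt \<phi> l v > max (tilt \<phi> l a) (tilt \<phi> l b) \<and>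
           (\<forall>\<gamma>>0. \<exists>v\<gamma> \<in> ball v \<gamma> \<inter> oseg v b. tilt \<phi> l v > tilt \<phi> l v\<gamma>)"
proof -
  define P where "P s = a + s *\<^sub>R (b - a)" for s
  define G where "G s = real_of_ereal (\<phi> (P s))" for s
  define H where "H s = G s + l a + l (b - a) * s" for s
  have "\<phi> a \<noteq> \<infinity>" "\<phi> b \<noteq> \<infinity>"
    using peak by (auto simp: tilt_def)
  then have \<phi>_P: "\<phi> (P s) = ereal (G s)" if "s \<in> {0..1}" for s
    using proper_quasiconvex_finite_on_segment[OF qc \<open>proper_fun \<phi>\<close>] that
    by (simp add: G_def P_def ereal_real')
  have "l (P s) = l a + l (b - a) * s" for s
    using \<open>linear l\<close> by (simp add: P_def linear_add linear_scale)
  then have tilt_P: "tilt \<phi> l (P s) = ereal (H s)" if "s \<in> {0..1}" for s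
    using \<phi>_P[OF that] by (simp add: tilt_def H_def)
  have "mono_on {s0..1} (\<lambda>s. H s - l (b - a) * s)"
  proof (rule mono_onI)
    fix s s' assume "s \<in> {s0..1}" "s' \<in> {s0..1}" "s \<le> s'"
    then have "\<phi> (P s) \<le> \<phi> (P s')"
      using quasiconvex_mono_on_ray_after_increase[OF qc \<open>0 < s0\<close> increase]
      by (auto simp: P_def intro: mono_onD)
    with \<open>s \<in> {s0..1}\<close> \<open>s' \<in> {s0..1}\<close> \<open>0 < s0\<close> have "G s \<le> G s'"
      by (simp add: \<phi>_P)
    then show "H s - l (b - a) * s \<le> H s' - l (b - a) * s'"
      by (simp add: H_def)
  qed
  moreover have "H 0 < H s0" and "H 1 < H s0"
    using peak tilt_P[of 0] tilt_P[of 1] tilt_P[of s0] \<open>0 < s0\<close> \<open>s0 < 1\<close>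
    by (simp_all add: P_def)
  ultimately obtain v where v: "v \<in> {s0..<1}" "H s0 \<le> H v"
    and descent: "\<forall>\<delta>>0. \<exists>s. v < s \<and> s < 1 \<and> s < v + \<delta> \<and> H s < H v"
    using exists_point_of_right_descent[of s0 1 H] \<open>s0 < 1\<close> by (meson less_imp_le)
  have "0 < v" using v \<open>0 < s0\<close> by simp
  show ?thesis
  proof (intro exI conjI allI impI)
    show "P v \<in> oseg a b"
      using \<open>0 < v\<close> v by (auto simp: oseg_def P_def)
    show "\<phi> (P v) \<le> \<phi> b"
      using mono_onD[OF quasiconvex_mono_on_ray_after_increase[OF qc \<open>0 < s0\<close> increase], of v 1] v
      by (simp add: P_def)
    show "\<phi> a < \<phi> (P v)"
      using quasiconvex_increase_persists_on_ray[OF qc \<open>0 < s0\<close> _ increase] v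
      by (simp add: P_def)
    show "max (tilt \<phi> l a) (tilt \<phi> l b) < tilt \<phi> l (P v)"
      using tilt_P[of 0] tilt_P[of 1] tilt_P[of v] \<open>H 0 < H s0\<close> \<open>H 1 < H s0\<close> v \<open>0 < v\<close>
      by (simp add: P_def)
  next
    fix \<gamma> :: real assume "\<gamma> > 0"
    have "0 < norm (b - a) + 1"
      by (simp add: add_nonneg_pos)
    with \<open>\<gamma> > 0\<close> obtain s where s: "v < s" "s < 1" "s < v + \<gamma> / (norm (b - a) + 1)" "H s < H v"
      using descent divide_pos_pos by blast
    have "s - v < \<gamma> / (norm (b - a) + 1)"
      using s(3) by simp
    with \<open>0 < norm (b - a) + 1\<close> have "(s - v) * (norm (b - a) + 1) < \<gamma>"
      by (simp add: pos_less_divide_eq)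
    then have "(s - v) * norm (b - a) < \<gamma>"
      using \<open>v < s\<close> by (simp add: algebra_simps)
    then have "P s \<in> ball (P v) \<gamma> \<inter> oseg (P v) b"
      unfolding P_def using s by (intro segment_point_in_ball_oseg)
    moreover have "tilt \<phi> l (P s) < tilt \<phi> l (P v)"
      using tilt_P[of s] tilt_P[of v] s v \<open>0 < v\<close> by simp
    ultimately show "\<exists>v\<gamma> \<in> ball (P v) \<gamma> \<inter> oseg (P v) b. tilt \<phi> l v\<gamma> < tilt \<phi> l (P v)"
      by blast
  qed
qed

theorem lemma3p3:
  fixes \<phi> :: "'a::banach \<Rightarrow> ereal" and vs :: "'a \<Rightarrow> real"
  assumes "quasiconvex \<phi>" and "proper_fun \<phi>" and "lsc \<phi>"
    and "bounded_linear vs"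
    and "\<not> quasiconvex (tilt \<phi> vs)"
  shows "\<exists>u v w. v \<in> oseg u w \<and>
           \<phi> w \<ge> \<phi> v \<and> \<phi> v > \<phi> u \<and>
           tilt \<phi> vs v > max (tilt \<phi> vs u) (tilt \<phi> vs w) \<and>
           (\<forall>\<gamma>>0. \<exists>v\<gamma> \<in> ball v \<gamma> \<inter> oseg v w. tilt \<phi> vs v > tilt \<phi> vs v\<gamma>)"
proof -
  have "linear vs" using \<open>bounded_linear vs\<close> by (rule bounded_linear.linear)
  obtain x y t where "0 < t" "t < 1"
    and peak: "max (tilt \<phi> vs x) (tilt \<phi> vs y) < tilt \<phi> vs (t *\<^sub>R x + (1 - t) *\<^sub>R y)"
    using \<open>\<not> quasiconvex (tilt \<phi> vs)\<close> unfolding quasiconvex_def by (auto simp: not_le)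
  define z where "z = t *\<^sub>R x + (1 - t) *\<^sub>R y"
  have zx: "z = x + (1 - t) *\<^sub>R (y - x)" and zy: "z = y + t *\<^sub>R (x - y)"
    by (simp_all add: z_def algebra_simps)
  note segment = tilt_peak_after_increase_on_segment[OF \<open>quasiconvex \<phi>\<close> \<open>proper_fun \<phi>\<close> \<open>linear vs\<close>]
  have "\<phi> x < \<phi> z \<or> \<phi> y < \<phi> z"
    using tilt_peak_imp_increase_from_endpoint[OF \<open>linear vs\<close> _ _ peak] \<open>0 < t\<close> \<open>t < 1\<close>
    by (simp add: z_def)
  then show ?thesis
  proof
    assume "\<phi> x < \<phi> z"
    with segment[of "1 - t" x y, folded zx] peak \<open>0 < t\<close> \<open>t < 1\<close> show ?thesis
      unfolding z_def by auto
  next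
    assume "\<phi> y < \<phi> z"
    with segment[of t y x, folded zy] peak \<open>0 < t\<close> \<open>t < 1\<close> show ?thesis
      unfolding z_def by (auto simp: max.commute)
  qed
qed

end
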